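(* Let $G$ be a graph with no massive edges and let $X=\{x_1,x_2,x_3,x_4\}\subseteq V(G)$ be the set of vertices with external momenta, all of them on-shell. Suppose $G$ has a $1$-separation $(A,B)$ with $A\cap B=\{v\}$, with $x_1,x_2,x_3\in A\setminus\{v\}$ and $x_4\in B\setminus\{v\}$. Give $G[A]$ the same external momenta and Schwinger parameters as $A$ has in $G$, except that the momentum at $v$ is set to $\rho_{x_4}$. Then $\phi_G=\phi_{G[A]}\psi_{G[B]}$.
   Context: A $1$-separation is a pair $(A,B)$ with $A\cup B=V(G)$, $|A\cap B|\le1$ and no edge between $A\setminus B$ and $B\setminus A$. Each edge $e$ has a variable $\alpha_e$ and a mass $m_e$ (massive if $m_e\neq0$); each vertex $u$ has $\rho_u\in\mathbb{R}^4$, zero outside $X$, with $\sum_u\rho_u=0$. $\rho^2=\rho_1^2+\rho_2^2+\rho_3^2-\rho_4^2$ and $\rho_u$ is on-shell if $\rho_u^2=0$. $\psi_G=\sum_T\prod_{e\notin E(T)}\alpha_e$ over spanning trees $T$. A spanning 2-forest is an unordered pair $(T_1,T_2)$ of vertex-disjoint trees covering $V(G)$; $\rho^{H}=\sum_{u\in V(H)}\rho_u$; $\phi_G=\sum_{(T_1,T_2)}(\rho^{T_1})^2\prod_{e\notin E(T_1)\cup E(T_2)}\alpha_e+\psi_G\sum_e\alpha_em_e^2$. *)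

theory Defs
  imports "HOL-Analysis.Analysis"
begin

definition graph :: "'v set \<Rightarrow> 'e set \<Rightarrow> ('e \<Rightarrow> 'v \<times> 'v) \<Rightarrow> bool" where
  "graph V E ends \<longleftrightarrow> finite V \<and> finite E \<and>
     (\<forall>e\<in>E. fst (ends e) \<in> V \<and> snd (ends e) \<in> V \<and> fst (ends e) \<noteq> snd (ends e))"

text \<open>Edges of E with both endpoints in S (edge set of the induced subgraph G[S]).\<close>
definition edges_in :: "'e set \<Rightarrow> ('e \<Rightarrow> 'v \<times> 'v) \<Rightarrow> 'v set \<Rightarrow> 'e set" where
  "edges_in E ends S = {e\<in>E. fst (ends e) \<in> S \<and> snd (ends e) \<in> S}"

definition edge_rel :: "'e set \<Rightarrow> ('e \<Rightarrow> 'v \<times> 'v) \<Rightarrow> ('v \<times> 'v) set" where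
  "edge_rel F ends = {(a, b). \<exists>e\<in>F. ends e = (a, b) \<or> ends e = (b, a)}"

definition is_tree :: "'v set \<Rightarrow> 'e set \<Rightarrow> ('e \<Rightarrow> 'v \<times> 'v) \<Rightarrow> bool" where
  "is_tree S F ends \<longleftrightarrow> finite S \<and> finite F \<and>
     (\<forall>e\<in>F. fst (ends e) \<in> S \<and> snd (ends e) \<in> S) \<and>
     (\<forall>u\<in>S. \<forall>w\<in>S. (u, w) \<in> (edge_rel F ends)\<^sup>*) \<and>
     card F + 1 = card S"

definition spanning_trees :: "'v set \<Rightarrow> 'e set \<Rightarrow> ('e \<Rightarrow> 'v \<times> 'v) \<Rightarrow> 'e set set" where
  "spanning_trees V E ends = {T. T \<subseteq> E \<and> is_tree V T ends}"

text \<open>Spanning 2-forests, each unordered pair (T1,T2) represented twice, as the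
ordered pairs (V(T1), E(T1) \<union> E(T2)) and (V(T2), E(T1) \<union> E(T2)).\<close>
definition spanning_2forests :: "'v set \<Rightarrow> 'e set \<Rightarrow> ('e \<Rightarrow> 'v \<times> 'v) \<Rightarrow> ('v set \<times> 'e set) set" where
  "spanning_2forests V E ends = {(S, F). S \<subseteq> V \<and> F \<subseteq> E \<and>
      (\<exists>F1 F2. F = F1 \<union> F2 \<and> is_tree S F1 ends \<and> is_tree (V - S) F2 ends)}"

definition psi :: "'v set \<Rightarrow> 'e set \<Rightarrow> ('e \<Rightarrow> 'v \<times> 'v) \<Rightarrow> ('e \<Rightarrow> real) \<Rightarrow> real" where
  "psi V E ends \<alpha> = (\<Sum>T\<in>spanning_trees V E ends. \<Prod>e\<in>E - T. \<alpha> e)"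

definition mink_sq :: "real^4 \<Rightarrow> real" where
  "mink_sq p = (p$1)^2 + (p$2)^2 + (p$3)^2 - (p$4)^2"

text \<open>The sum over unordered pairs (T1,T2) equals half the sum over ordered representatives.\<close>
definition phi :: "'v set \<Rightarrow> 'e set \<Rightarrow> ('e \<Rightarrow> 'v \<times> 'v) \<Rightarrow> ('e \<Rightarrow> real) \<Rightarrow> ('e \<Rightarrow> real)
                    \<Rightarrow> ('v \<Rightarrow> real^4) \<Rightarrow> real" where
  "phi V E ends \<alpha> m \<rho> =
     (1/2) * (\<Sum>(S, F)\<in>spanning_2forests V E ends. mink_sq (\<Sum>u\<in>S. \<rho> u) * (\<Prod>e\<in>E - F. \<alpha> e))
     + psi V E ends \<alpha> * (\<Sum>e\<in>E. \<alpha> e * (m e)^2)"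

end

theory Submission
  imports Defs
begin

text \<open>Since the edges are massless and momentum is conserved, \<open>phi\<close> of G is a sum over the
2-forests whose first tree contains the cut vertex v, weighted by the Minkowski square of the
momentum of the second tree. That second tree avoids v, hence lies in A - {v} or in B - {v}; in
the latter case its momentum is 0 or the on-shell momentum at x4, and the term vanishes. The
surviving 2-forests are exactly the rooted 2-forests of G[A] glued at v to a spanning tree of
G[B], and their weights factor, which gives \<open>phi\<close> of G[A] times \<open>psi\<close> of G[B] once the momentum
at x4 is moved to v.\<close>

lemma edge_rel_mono: "F \<subseteq> F' \<Longrightarrow> edge_rel F ends \<subseteq> edge_rel F' ends"
  unfolding edge_rel_def by auto

lemma rtrancl_edge_rel_sym: "(x, y) \<in> (edge_rel F ends)\<^sup>* \<Longrightarrow> (y, x) \<in> (edge_rel F ends)\<^sup>*"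
proof -
  have "sym (edge_rel F ends)"
    unfolding sym_def edge_rel_def by auto
  then show "(x, y) \<in> (edge_rel F ends)\<^sup>* \<Longrightarrow> (y, x) \<in> (edge_rel F ends)\<^sup>*"
    by (rule symD[OF sym_rtrancl])
qed

lemma Image_rtrancl_edge_rel_eq:
  assumes "(x, y) \<in> (edge_rel F ends)\<^sup>*"
  shows "(edge_rel F ends)\<^sup>* `` {x} = (edge_rel F ends)\<^sup>* `` {y}"
  using rtrancl_trans[OF assms] rtrancl_trans[OF rtrancl_edge_rel_sym[OF assms]] by blast

lemma rtrancl_edge_rel_closed:
  assumes "\<forall>e\<in>F. fst (ends e) \<in> S \<and> snd (ends e) \<in> S" "w \<in> S" "(w, y) \<in> (edge_rel F ends)\<^sup>*"
  shows "y \<in> S"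
proof -
  have "edge_rel F ends `` S \<subseteq> S"
    using assms(1) unfolding edge_rel_def by force
  then have "(edge_rel F ends)\<^sup>* `` S = S"
    by (rule Image_closed_trancl)
  then show ?thesis
    using assms(2,3) by blast
qed

definition edge_components :: "'v set \<Rightarrow> 'e set \<Rightarrow> ('e \<Rightarrow> 'v \<times> 'v) \<Rightarrow> 'v set set" where
  "edge_components S F ends = (\<lambda>w. (edge_rel F ends)\<^sup>* `` {w}) ` S"

lemma Image_rtrancl_edge_rel_insert:
  assumes "fst (ends e) \<notin> (edge_rel F ends)\<^sup>* `` {w}" "snd (ends e) \<notin> (edge_rel F ends)\<^sup>* `` {w}"
  shows "(edge_rel (insert e F) ends)\<^sup>* `` {w} = (edge_rel F ends)\<^sup>* `` {w}"
proof
  show "(edge_rel (insert e F) ends)\<^sup>* `` {w} \<subseteq> (edge_rel F ends)\<^sup>* `` {w}"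
  proof
    fix y assume "y \<in> (edge_rel (insert e F) ends)\<^sup>* `` {w}"
    then have "(w, y) \<in> (edge_rel (insert e F) ends)\<^sup>*"
      by simp
    then show "y \<in> (edge_rel F ends)\<^sup>* `` {w}"
    proof (induction rule: rtrancl_induct)
      case (step y z)
      obtain e' where e': "e' \<in> insert e F" "ends e' = (y, z) \<or> ends e' = (z, y)"
        using step.hyps(2) unfolding edge_rel_def by blast
      have "e' \<noteq> e"
        using e'(2) step.IH assms by (metis fst_conv snd_conv)
      then have "(y, z) \<in> edge_rel F ends"
        using e' unfolding edge_rel_def by blast
      with step.IH show ?case
        by (simp add: rtrancl_into_rtrancl)
    qed simp
  qed
  show "(edge_rel F ends)\<^sup>* `` {w} \<subseteq> (edge_rel (insert e F) ends)\<^sup>* `` {w}"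
    by (intro Image_mono rtrancl_mono edge_rel_mono subset_insertI subset_refl)
qed

lemma card_components_insert:
  assumes "finite S" "fst (ends e) \<in> S" "snd (ends e) \<in> S"
  shows "card (edge_components S F ends) \<le> card (edge_components S (insert e F) ends) + 1"
proof -
  define R R' where "R = (edge_rel F ends)\<^sup>*" and "R' = (edge_rel (insert e F) ends)\<^sup>*"
  define a b where "a = fst (ends e)" and "b = snd (ends e)"
  let ?C = "edge_components S F ends" and ?C' = "edge_components S (insert e F) ends"
    and ?P = "{R `` {a}, R `` {b}}"
  have fin: "finite ?C" "finite ?C'"
    using assms(1) unfolding edge_components_def by auto
  have aC': "R' `` {a} \<in> ?C'"
    using assms(2) unfolding a_def R'_def edge_components_def by auto
  have "?C - ?P \<subseteq> ?C' - {R' `` {a}}"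
  proof
    fix X assume X: "X \<in> ?C - ?P"
    then obtain w where w: "w \<in> S" "X = R `` {w}"
      unfolding edge_components_def R_def by auto
    have "a \<notin> X" "b \<notin> X"
      using X w Image_rtrancl_edge_rel_eq[of w a F ends] Image_rtrancl_edge_rel_eq[of w b F ends]
      unfolding R_def by auto
    then have "R' `` {w} = X"
      using Image_rtrancl_edge_rel_insert w unfolding R_def R'_def a_def b_def by metis
    moreover have "a \<in> R' `` {a}"
      by (simp add: R'_def)
    ultimately show "X \<in> ?C' - {R' `` {a}}"
      using \<open>a \<notin> X\<close> w(1) unfolding edge_components_def R'_def by auto
  qed
  then have "card (?C - ?P) \<le> card (?C' - {R' `` {a}})"
    using fin by (intro card_mono) auto
  also have "\<dots> < card ?C'"
    using aC' fin(2) by (rule card_Diff1_less[rotated])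
  finally have "card (?C - ?P) < card ?C'" .
  moreover have "card ?C \<le> card ((?C - ?P) \<union> ?P)"
    using fin by (intro card_mono) auto
  moreover have "card ((?C - ?P) \<union> ?P) \<le> card (?C - ?P) + card ?P"
    by (rule card_Un_le)
  moreover have "card ?P \<le> 2"
    by (cases "R `` {a} = R `` {b}") auto
  ultimately show ?thesis
    by linarith
qed

lemma card_le_card_edges_plus_components:
  assumes "finite F" "finite S" "\<forall>e\<in>F. fst (ends e) \<in> S \<and> snd (ends e) \<in> S"
  shows "card S \<le> card F + card (edge_components S F ends)"
  using assms
proof (induction F rule: finite_induct)
  case empty
  have "edge_components S {} ends = (\<lambda>w. {w}) ` S"
    unfolding edge_components_def edge_rel_def by simp
  then show ?case
    by (simp add: card_image)
next
  case (insert e F)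
  have "card S \<le> card F + card (edge_components S F ends)"
    using insert by simp
  moreover have "card (edge_components S F ends) \<le> card (edge_components S (insert e F) ends) + 1"
    using insert.prems by (intro card_components_insert) auto
  ultimately show ?case
    using insert.hyps by simp
qed

lemma card_le_Suc_card_edges_if_connected:
  assumes "finite F" "finite S" "\<forall>e\<in>F. fst (ends e) \<in> S \<and> snd (ends e) \<in> S"
    and "\<forall>u\<in>S. \<forall>w\<in>S. (u, w) \<in> (edge_rel F ends)\<^sup>*"
  shows "card S \<le> card F + 1"
proof -
  have "X = Y" if XY: "X \<in> edge_components S F ends" "Y \<in> edge_components S F ends" for X Y
  proof -
    obtain u w where "u \<in> S" "w \<in> S" "X = (edge_rel F ends)\<^sup>* `` {u}" "Y = (edge_rel F ends)\<^sup>* `` {w}"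
      using XY unfolding edge_components_def by blast
    with assms(4) show ?thesis
      using Image_rtrancl_edge_rel_eq[of u w F ends] by simp
  qed
  moreover have "finite (edge_components S F ends)"
    using assms(2) unfolding edge_components_def by simp
  ultimately have "card (edge_components S F ends) \<le> Suc 0"
    using card_le_Suc0_iff_eq by blast
  then show ?thesis
    using card_le_card_edges_plus_components[OF assms(1-3)] by simp
qed

lemma edges_in_split:
  assumes cap: "A \<inter> B = {v}"
    and sides: "\<forall>e\<in>F. (fst (ends e) \<in> A \<and> snd (ends e) \<in> A) \<or> (fst (ends e) \<in> B \<and> snd (ends e) \<in> B)"
    and loopless: "\<forall>e\<in>F. fst (ends e) \<noteq> snd (ends e)"
  shows "F = edges_in F ends A \<union> edges_in F ends B" "edges_in F ends A \<inter> edges_in F ends B = {}"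
proof -
  show "F = edges_in F ends A \<union> edges_in F ends B"
    using sides unfolding edges_in_def by auto
  show "edges_in F ends A \<inter> edges_in F ends B = {}"
  proof (rule ccontr)
    assume "edges_in F ends A \<inter> edges_in F ends B \<noteq> {}"
    then obtain e where "e \<in> F" "fst (ends e) = v" "snd (ends e) = v"
      using cap unfolding edges_in_def by auto
    then show False
      using loopless by auto
  qed
qed

lemma rtrancl_edge_rel_retract:
  assumes cap: "A \<inter> B = {v}"
    and sides: "\<forall>e\<in>F. (fst (ends e) \<in> A \<and> snd (ends e) \<in> A) \<or> (fst (ends e) \<in> B \<and> snd (ends e) \<in> B)"
    and "(x, y) \<in> (edge_rel F ends)\<^sup>*"
  shows "(if x \<in> A then x else v, if y \<in> A then y else v) \<in> (edge_rel (edges_in F ends A) ends)\<^sup>*"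
  using assms(3)
proof (induction rule: rtrancl_induct)
  case (step y z)
  obtain e where e: "e \<in> F" "ends e = (y, z) \<or> ends e = (z, y)"
    using step.hyps(2) unfolding edge_rel_def by blast
  show ?case
  proof (cases "fst (ends e) \<in> A \<and> snd (ends e) \<in> A")
    case True
    then have "y \<in> A" "z \<in> A" "(y, z) \<in> edge_rel (edges_in F ends A) ends"
      using e unfolding edge_rel_def edges_in_def by auto
    then show ?thesis
      using step.IH by (simp add: rtrancl_into_rtrancl)
  next
    case False
    then have "y \<in> B" "z \<in> B"
      using sides e by auto
    then have "(if y \<in> A then y else v) = v" "(if z \<in> A then z else v) = v"
      using cap by auto
    then show ?thesis
      using step.IH by simp
  qed
qed simp

lemma connected_edges_in_side:
  assumes cap: "A \<inter> B = {v}"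
    and sides: "\<forall>e\<in>F. (fst (ends e) \<in> A \<and> snd (ends e) \<in> A) \<or> (fst (ends e) \<in> B \<and> snd (ends e) \<in> B)"
    and conn: "\<forall>u\<in>A \<union> B. \<forall>w\<in>A \<union> B. (u, w) \<in> (edge_rel F ends)\<^sup>*"
  shows "\<forall>u\<in>A. \<forall>w\<in>A. (u, w) \<in> (edge_rel (edges_in F ends A) ends)\<^sup>*"
proof (intro ballI)
  fix u w assume "u \<in> A" "w \<in> A"
  then have "(u, w) \<in> (edge_rel F ends)\<^sup>*"
    using conn by blast
  from rtrancl_edge_rel_retract[OF cap sides this]
  show "(u, w) \<in> (edge_rel (edges_in F ends A) ends)\<^sup>*"
    using \<open>u \<in> A\<close> \<open>w \<in> A\<close> by simp
qed

lemma is_tree_split_iff: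
  assumes cap: "A \<inter> B = {v}" and fin: "finite (A \<union> B)" "finite F"
    and sides: "\<forall>e\<in>F. (fst (ends e) \<in> A \<and> snd (ends e) \<in> A) \<or> (fst (ends e) \<in> B \<and> snd (ends e) \<in> B)"
    and loopless: "\<forall>e\<in>F. fst (ends e) \<noteq> snd (ends e)"
  shows "is_tree (A \<union> B) F ends \<longleftrightarrow> is_tree A (edges_in F ends A) ends \<and> is_tree B (edges_in F ends B) ends"
proof -
  define FA FB where "FA = edges_in F ends A" and "FB = edges_in F ends B"
  have split: "F = FA \<union> FB" "FA \<inter> FB = {}"
    using edges_in_split[OF cap sides loopless] unfolding FA_def FB_def by auto
  have finAB: "finite A" "finite B" "finite FA" "finite FB"
    using fin split(1) by auto
  have card_F: "card F = card FA + card FB"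
    using split finAB card_Un_disjoint by metis
  have card_AB: "card (A \<union> B) + 1 = card A + card B"
    using card_Un_Int[OF finAB(1,2)] cap by simp
  have inside: "\<forall>e\<in>FA. fst (ends e) \<in> A \<and> snd (ends e) \<in> A" "\<forall>e\<in>FB. fst (ends e) \<in> B \<and> snd (ends e) \<in> B"
    "\<forall>e\<in>F. fst (ends e) \<in> A \<union> B \<and> snd (ends e) \<in> A \<union> B"
    using sides unfolding FA_def FB_def edges_in_def by auto
  show ?thesis
    unfolding FA_def[symmetric] FB_def[symmetric]
  proof
    assume tree: "is_tree (A \<union> B) F ends"
    have connA: "\<forall>u\<in>A. \<forall>w\<in>A. (u, w) \<in> (edge_rel FA ends)\<^sup>*"
      using connected_edges_in_side[OF cap sides] tree unfolding FA_def is_tree_def by blast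
    have connB: "\<forall>u\<in>B. \<forall>w\<in>B. (u, w) \<in> (edge_rel FB ends)\<^sup>*"
      using connected_edges_in_side[of B A v F ends] cap sides tree unfolding FB_def is_tree_def
      by (metis Int_commute sup_commute)
    have "card A \<le> card FA + 1" "card B \<le> card FB + 1"
      using card_le_Suc_card_edges_if_connected finAB inside connA connB by blast+
    then have "card FA + 1 = card A" "card FB + 1 = card B"
      using tree card_F card_AB unfolding is_tree_def by linarith+
    then show "is_tree A FA ends \<and> is_tree B FB ends"
      unfolding is_tree_def using finAB inside connA connB by blast
  next
    assume trees: "is_tree A FA ends \<and> is_tree B FB ends"
    have to_v: "(u, v) \<in> (edge_rel F ends)\<^sup>*" if "u \<in> A \<union> B" for u
    proof -
      have "(u, v) \<in> (edge_rel FA ends)\<^sup>* \<union> (edge_rel FB ends)\<^sup>*"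
        using trees that cap unfolding is_tree_def by blast
      then show ?thesis
        using rtrancl_mono[OF edge_rel_mono[of FA F]] rtrancl_mono[OF edge_rel_mono[of FB F]] split(1)
        by blast
    qed
    have "\<forall>u\<in>A \<union> B. \<forall>w\<in>A \<union> B. (u, w) \<in> (edge_rel F ends)\<^sup>*"
      using to_v rtrancl_edge_rel_sym rtrancl_trans by metis
    then show "is_tree (A \<union> B) F ends"
      using fin inside(3) trees card_F card_AB unfolding is_tree_def by auto
  qed
qed

lemma tree_within_one_side:
  assumes cap: "A \<inter> B = {v}"
    and sides: "\<forall>e\<in>F. (fst (ends e) \<in> A \<and> snd (ends e) \<in> A) \<or> (fst (ends e) \<in> B \<and> snd (ends e) \<in> B)"
    and tree: "is_tree W F ends" and "v \<notin> W" "W \<subseteq> A \<union> B"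
  shows "W \<subseteq> A - {v} \<or> W \<subseteq> B - {v}"
proof (rule ccontr)
  assume "\<not> ?thesis"
  then obtain a b where "a \<in> W" "a \<in> A" "b \<in> W" "b \<notin> A"
    using assms(4,5) by blast
  moreover have "(a, b) \<in> (edge_rel F ends)\<^sup>*"
    using tree \<open>a \<in> W\<close> \<open>b \<in> W\<close> unfolding is_tree_def by blast
  ultimately have "(a, v) \<in> (edge_rel (edges_in F ends A) ends)\<^sup>*"
    using rtrancl_edge_rel_retract[OF cap sides] by fastforce
  moreover have "\<forall>e\<in>edges_in F ends A. fst (ends e) \<in> W \<and> snd (ends e) \<in> W"
    using tree unfolding is_tree_def edges_in_def by auto
  ultimately have "v \<in> W"
    using rtrancl_edge_rel_closed \<open>a \<in> W\<close> by metis
  then show False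
    using assms(4) by blast
qed

lemma spanning_2forests_subset:
  "(S, F) \<in> spanning_2forests W EE ends \<Longrightarrow> S \<subseteq> W \<and> F \<subseteq> EE"
  unfolding spanning_2forests_def by blast

lemma spanning_2forests_swap:
  assumes "(S, F) \<in> spanning_2forests W EE ends"
  shows "(W - S, F) \<in> spanning_2forests W EE ends"
proof -
  obtain F1 F2 where "S \<subseteq> W" "F \<subseteq> EE" "F = F1 \<union> F2" "is_tree S F1 ends" "is_tree (W - S) F2 ends"
    using assms unfolding spanning_2forests_def by blast
  moreover have "W - (W - S) = S"
    using \<open>S \<subseteq> W\<close> by blast
  ultimately have "W - S \<subseteq> W \<and> F \<subseteq> EE \<and>
      F = F2 \<union> F1 \<and> is_tree (W - S) F2 ends \<and> is_tree (W - (W - S)) F1 ends"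
    by auto
  then show ?thesis
    unfolding spanning_2forests_def by blast
qed

lemma finite_spanning_2forests:
  "finite W \<Longrightarrow> finite EE \<Longrightarrow> finite (spanning_2forests W EE ends)"
  by (rule finite_subset[of _ "Pow W \<times> Pow EE"]) (auto simp: spanning_2forests_def)

definition rooted_2forests :: "'v set \<Rightarrow> 'e set \<Rightarrow> ('e \<Rightarrow> 'v \<times> 'v) \<Rightarrow> 'v \<Rightarrow> ('v set \<times> 'e set) set" where
  "rooted_2forests W EE ends r = {p \<in> spanning_2forests W EE ends. r \<in> fst p}"

lemma bij_betw_swap_rooted_2forests:
  assumes "r \<in> W"
  shows "bij_betw (\<lambda>(S, F). (W - S, F)) (rooted_2forests W EE ends r)
           (spanning_2forests W EE ends - rooted_2forests W EE ends r)"
proof (rule bij_betw_byWitness[where f' = "\<lambda>(S, F). (W - S, F)"])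
  have "(\<lambda>(S, F). (W - S, F)) ((\<lambda>(S, F). (W - S, F)) p) = p"
    if "p \<in> spanning_2forests W EE ends" for p
    using that by (cases p) (auto simp: double_diff dest: spanning_2forests_subset)
  then show "\<forall>p\<in>rooted_2forests W EE ends r. (\<lambda>(S, F). (W - S, F)) ((\<lambda>(S, F). (W - S, F)) p) = p"
    and "\<forall>p\<in>spanning_2forests W EE ends - rooted_2forests W EE ends r.
           (\<lambda>(S, F). (W - S, F)) ((\<lambda>(S, F). (W - S, F)) p) = p"
    unfolding rooted_2forests_def by auto
  show "(\<lambda>(S, F). (W - S, F)) ` rooted_2forests W EE ends r
          \<subseteq> spanning_2forests W EE ends - rooted_2forests W EE ends r"
    and "(\<lambda>(S, F). (W - S, F)) ` (spanning_2forests W EE ends - rooted_2forests W EE ends r)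
          \<subseteq> rooted_2forests W EE ends r"
    using spanning_2forests_swap assms unfolding rooted_2forests_def by fastforce+
qed

lemma mink_sq_uminus: "mink_sq (- p) = mink_sq p"
  unfolding mink_sq_def by simp

text \<open>By momentum conservation the two trees of a 2-forest carry opposite momenta, so both
orderings of an unordered 2-forest have the same weight; keeping the ordering in which the
second tree avoids the root r cancels the factor 1/2.\<close>

lemma phi_massless_eq_rooted_sum:
  assumes fin: "finite W" "finite EE" and "r \<in> W"
    and conservation: "(\<Sum>u\<in>W. \<rho> u) = 0" and massless: "\<forall>e\<in>EE. m e = 0"
  shows "phi W EE ends \<alpha> m \<rho> =
    (\<Sum>(S, F)\<in>rooted_2forests W EE ends r. mink_sq (\<Sum>u\<in>W - S. \<rho> u) * (\<Prod>e\<in>EE - F. \<alpha> e))"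
proof -
  let ?P = "spanning_2forests W EE ends" and ?Q = "rooted_2forests W EE ends r"
  define h where "h = (\<lambda>(S, F). mink_sq (\<Sum>u\<in>S. \<rho> u) * (\<Prod>e\<in>EE - F. \<alpha> e))"
  define g where "g = (\<lambda>(S, F). mink_sq (\<Sum>u\<in>W - S. \<rho> u) * (\<Prod>e\<in>EE - F. \<alpha> e))"
  have h_eq_g: "h p = g p" if "p \<in> ?P" for p
  proof (cases p)
    case (Pair S F)
    then have "S \<subseteq> W"
      using that spanning_2forests_subset by blast
    then have "(\<Sum>u\<in>W - S. \<rho> u) = - (\<Sum>u\<in>S. \<rho> u)"
      using sum_diff[OF fin(1), of S \<rho>] conservation by simp
    then show ?thesis
      unfolding h_def g_def Pair by (simp add: mink_sq_uminus)
  qed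
  have swap_h: "h ((\<lambda>(S, F). (W - S, F)) p) = g p" for p
    unfolding h_def g_def by (cases p) simp
  have fin_P: "finite ?P"
    using finite_spanning_2forests[OF fin] .
  have "?Q \<subseteq> ?P"
    unfolding rooted_2forests_def by blast
  then have "sum h ?P = sum h ?Q + sum h (?P - ?Q)"
    using fin_P by (metis add.commute sum.subset_diff)
  also have "sum h (?P - ?Q) = sum g ?Q"
    using sum.reindex_bij_betw[OF bij_betw_swap_rooted_2forests[OF \<open>r \<in> W\<close>], of h] swap_h by simp
  also have "sum h ?Q = sum g ?Q"
    using h_eq_g \<open>?Q \<subseteq> ?P\<close> by (intro sum.cong) auto
  finally have "sum h ?P = 2 * sum g ?Q"
    by simp
  moreover have "phi W EE ends \<alpha> m \<rho> = (1/2) * sum h ?P"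
    using massless unfolding phi_def h_def by simp
  ultimately show ?thesis
    unfolding g_def by simp
qed

lemma mink_sq_sum_onshell_support:
  assumes "finite U" "\<forall>u\<in>U - {x}. \<rho> u = 0" "mink_sq (\<rho> x) = 0"
  shows "mink_sq (\<Sum>u\<in>U. \<rho> u) = 0"
proof (cases "x \<in> U")
  case True
  then show ?thesis
    using assms sum.remove[OF assms(1) True, of \<rho>] by simp
next
  case False
  then show ?thesis
    using assms(2) by (simp add: mink_sq_def)
qed

lemma sum_upd_cut_vertex:
  assumes fin: "finite A" "finite B" and cap: "A \<inter> B = {v}"
    and "x \<in> B - {v}" and "\<forall>u\<in>B - {x}. \<rho> u = 0"
  shows "(\<Sum>u\<in>A. (\<rho>(v := \<rho> x)) u) = (\<Sum>u\<in>A \<union> B. \<rho> u)"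
proof -
  have "v \<in> A" "x \<in> B"
    using cap assms(4) by auto
  have "(\<Sum>u\<in>A. (\<rho>(v := \<rho> x)) u) = \<rho> x + (\<Sum>u\<in>A - {v}. \<rho> u)"
    using sum.remove[OF fin(1) \<open>v \<in> A\<close>, of "\<rho>(v := \<rho> x)"] by simp
  moreover have "(\<Sum>u\<in>B. \<rho> u) = \<rho> x"
    using sum.remove[OF fin(2) \<open>x \<in> B\<close>, of \<rho>] assms(5) by simp
  moreover have "A \<union> B = (A - {v}) \<union> B" "(A - {v}) \<inter> B = {}"
    using cap by auto
  ultimately show ?thesis
    using sum.union_disjoint[of "A - {v}" B \<rho>] fin by (simp add: add.commute)
qed

locale one_separation =
  fixes V :: "'v set" and E :: "'e set" and ends :: "'e \<Rightarrow> 'v \<times> 'v" and A B :: "'v set" and v :: 'v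
  assumes graph: "graph V E ends"
    and cover: "A \<union> B = V" and cap: "A \<inter> B = {v}"
    and sides: "\<forall>e\<in>E. (fst (ends e) \<in> A \<and> snd (ends e) \<in> A) \<or> (fst (ends e) \<in> B \<and> snd (ends e) \<in> B)"
begin

abbreviation "EA \<equiv> edges_in E ends A"
abbreviation "EB \<equiv> edges_in E ends B"

lemma finite_parts: "finite V" "finite E" "finite A" "finite B" "finite EA" "finite EB"
  using graph cover unfolding graph_def edges_in_def by auto

lemma loopless: "\<forall>e\<in>E. fst (ends e) \<noteq> snd (ends e)"
  using graph unfolding graph_def by blast

lemma edges_split: "E = EA \<union> EB" "EA \<inter> EB = {}"
  using edges_in_split[OF cap sides loopless] by auto

lemma edges_in_eq_Int: "F \<subseteq> E \<Longrightarrow> edges_in F ends X = F \<inter> edges_in E ends X"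
  unfolding edges_in_def by blast

lemma sides_subset:
  "F \<subseteq> E \<Longrightarrow> \<forall>e\<in>F. (fst (ends e) \<in> A \<and> snd (ends e) \<in> A) \<or> (fst (ends e) \<in> B \<and> snd (ends e) \<in> B)"
  using sides by blast

lemma far_side_cases:
  assumes "(S, F) \<in> rooted_2forests V E ends v"
  shows "V - S \<subseteq> A - {v} \<or> V - S \<subseteq> B - {v}"
proof -
  obtain F1 F2 where "F = F1 \<union> F2" "F \<subseteq> E" "is_tree (V - S) F2 ends" "v \<in> S"
    using assms unfolding rooted_2forests_def spanning_2forests_def by auto
  then show ?thesis
    using tree_within_one_side[OF cap sides_subset] cover by blast
qed

lemma rooted_2forests_glue:
  assumes "(S, F) \<in> rooted_2forests A EA ends v" and "T \<in> spanning_trees B EB ends"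
  shows "(S \<union> B, F \<union> T) \<in> rooted_2forests V E ends v" "V - (S \<union> B) \<subseteq> A - {v}"
proof -
  obtain F1 F2 where S: "S \<subseteq> A" "v \<in> S" and F: "F \<subseteq> EA" "F = F1 \<union> F2"
    and trees: "is_tree S F1 ends" "is_tree (A - S) F2 ends"
    using assms(1) unfolding rooted_2forests_def spanning_2forests_def by auto
  have T: "T \<subseteq> EB" "is_tree B T ends"
    using assms(2) unfolding spanning_trees_def by auto
  have capS: "S \<inter> B = {v}"
    using S cap by blast
  have F1_in_S: "F1 \<subseteq> edges_in F1 ends S" and T_in_B: "T \<subseteq> edges_in T ends B"
    using trees(1) T(1) unfolding is_tree_def edges_in_def by auto
  have F1T: "F1 \<union> T \<subseteq> E"
    using F T edges_split by blast
  then have loopless_F1T: "\<forall>e\<in>F1 \<union> T. fst (ends e) \<noteq> snd (ends e)"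
    using loopless by blast
  have sidesS: "\<forall>e\<in>F1 \<union> T. (fst (ends e) \<in> S \<and> snd (ends e) \<in> S) \<or> (fst (ends e) \<in> B \<and> snd (ends e) \<in> B)"
    using F1_in_S T_in_B unfolding edges_in_def by blast
  note edges_in_split[OF capS sidesS loopless_F1T]
  moreover have "F1 \<subseteq> edges_in (F1 \<union> T) ends S" "T \<subseteq> edges_in (F1 \<union> T) ends B"
    using F1_in_S T_in_B unfolding edges_in_def by blast+
  ultimately have "edges_in (F1 \<union> T) ends S = F1" "edges_in (F1 \<union> T) ends B = T"
    by blast+
  moreover have "finite (S \<union> B)" "finite (F1 \<union> T)"
    using finite_parts S F1T finite_subset by blast+
  ultimately have "is_tree (S \<union> B) (F1 \<union> T) ends"
    using is_tree_split_iff[OF capS _ _ sidesS loopless_F1T] trees(1) T(2) by simp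
  moreover have "V - (S \<union> B) = A - S"
    using cap S unfolding cover[symmetric] by auto
  moreover have "S \<union> B \<subseteq> V" "F \<union> T \<subseteq> E" "F \<union> T = (F1 \<union> T) \<union> F2"
    using cover S F T edges_split by blast+
  ultimately show "(S \<union> B, F \<union> T) \<in> rooted_2forests V E ends v" "V - (S \<union> B) \<subseteq> A - {v}"
    using trees(2) S unfolding rooted_2forests_def spanning_2forests_def by auto
qed

lemma rooted_2forests_split:
  assumes "(S, F) \<in> rooted_2forests V E ends v" and far: "V - S \<subseteq> A - {v}"
  shows "(S \<inter> A, edges_in F ends A) \<in> rooted_2forests A EA ends v"
    "edges_in F ends B \<in> spanning_trees B EB ends"
proof -
  obtain F1 F2 where S: "S \<subseteq> V" "v \<in> S" and F: "F \<subseteq> E" "F = F1 \<union> F2"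
    and trees: "is_tree S F1 ends" "is_tree (V - S) F2 ends"
    using assms(1) unfolding rooted_2forests_def spanning_2forests_def by auto
  have SAB: "(S \<inter> A) \<union> B = S" "(S \<inter> A) \<inter> B = {v}"
    using S far cap cover by auto
  have F1_in_S: "\<forall>e\<in>F1. fst (ends e) \<in> S \<and> snd (ends e) \<in> S"
    and F2_in_A: "\<forall>e\<in>F2. fst (ends e) \<in> A - {v} \<and> snd (ends e) \<in> A - {v}"
    using trees far unfolding is_tree_def by blast+
  have sides_F1: "\<forall>e\<in>F1. (fst (ends e) \<in> S \<inter> A \<and> snd (ends e) \<in> S \<inter> A) \<or> (fst (ends e) \<in> B \<and> snd (ends e) \<in> B)"
    using sides F F1_in_S by blast
  have "finite ((S \<inter> A) \<union> B)" "finite F1"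
    using finite_parts S F finite_subset by blast+
  then have "is_tree (S \<inter> A) (edges_in F1 ends (S \<inter> A)) ends" "is_tree B (edges_in F1 ends B) ends"
    using is_tree_split_iff[OF SAB(2) _ _ sides_F1] loopless F trees(1) SAB(1) by auto
  moreover have "edges_in F ends A = edges_in F1 ends (S \<inter> A) \<union> F2"
    using F F1_in_S F2_in_A unfolding edges_in_def by auto
  moreover have "edges_in F ends B = edges_in F1 ends B"
    using F F2_in_A cap unfolding edges_in_def by auto
  moreover have "A - (S \<inter> A) = V - S" "edges_in F ends A \<subseteq> EA" "edges_in F ends B \<subseteq> EB"
    using far F cover unfolding edges_in_def by auto
  ultimately show "(S \<inter> A, edges_in F ends A) \<in> rooted_2forests A EA ends v"
    "edges_in F ends B \<in> spanning_trees B EB ends"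
    using trees(2) S cap unfolding rooted_2forests_def spanning_2forests_def spanning_trees_def by auto
qed

lemma split_glue:
  assumes "(S, F) \<in> rooted_2forests A EA ends v" and "T \<in> spanning_trees B EB ends"
  shows "(((S \<union> B) \<inter> A, edges_in (F \<union> T) ends A), edges_in (F \<union> T) ends B) = ((S, F), T)"
proof -
  have "S \<subseteq> A" "v \<in> S" "F \<subseteq> EA" "T \<subseteq> EB"
    using assms unfolding rooted_2forests_def spanning_2forests_def spanning_trees_def by auto
  moreover have "F \<union> T \<subseteq> E"
    using calculation edges_split by blast
  ultimately have "(S \<union> B) \<inter> A = S" "(F \<union> T) \<inter> EA = F" "(F \<union> T) \<inter> EB = T"
    using cap edges_split(2) by auto
  then show ?thesis
    using edges_in_eq_Int[OF \<open>F \<union> T \<subseteq> E\<close>] by simp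
qed

lemma glue_split:
  assumes "(S, F) \<in> rooted_2forests V E ends v" and "V - S \<subseteq> A - {v}"
  shows "(S \<inter> A \<union> B, edges_in F ends A \<union> edges_in F ends B) = (S, F)"
proof -
  have "S \<subseteq> V" "F \<subseteq> E"
    using assms(1) unfolding rooted_2forests_def spanning_2forests_def by auto
  then have "S \<inter> A \<union> B = S" "F \<inter> EA \<union> F \<inter> EB = F"
    using assms(2) cover cap edges_split(1) by auto
  then show ?thesis
    using edges_in_eq_Int[OF \<open>F \<subseteq> E\<close>] by simp
qed

lemma bij_betw_glue:
  "bij_betw (\<lambda>((S, F), T). (S \<union> B, F \<union> T))
     (rooted_2forests A EA ends v \<times> spanning_trees B EB ends)
     {p \<in> rooted_2forests V E ends v. V - fst p \<subseteq> A - {v}}"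
proof (rule bij_betw_byWitness[where f' = "\<lambda>(S, F). ((S \<inter> A, edges_in F ends A), edges_in F ends B)"])
  show "\<forall>x\<in>rooted_2forests A EA ends v \<times> spanning_trees B EB ends.
      (\<lambda>(S, F). ((S \<inter> A, edges_in F ends A), edges_in F ends B)) ((\<lambda>((S, F), T). (S \<union> B, F \<union> T)) x) = x"
  proof
    fix x assume "x \<in> rooted_2forests A EA ends v \<times> spanning_trees B EB ends"
    then obtain S F T where "x = ((S, F), T)" "(S, F) \<in> rooted_2forests A EA ends v"
      "T \<in> spanning_trees B EB ends"
      by auto
    then show "(\<lambda>(S, F). ((S \<inter> A, edges_in F ends A), edges_in F ends B)) ((\<lambda>((S, F), T). (S \<union> B, F \<union> T)) x) = x"
      using split_glue by simp
  qed
  show "\<forall>p\<in>{p \<in> rooted_2forests V E ends v. V - fst p \<subseteq> A - {v}}.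
      (\<lambda>((S, F), T). (S \<union> B, F \<union> T)) ((\<lambda>(S, F). ((S \<inter> A, edges_in F ends A), edges_in F ends B)) p) = p"
  proof
    fix p assume "p \<in> {p \<in> rooted_2forests V E ends v. V - fst p \<subseteq> A - {v}}"
    then obtain S F where "p = (S, F)" "(S, F) \<in> rooted_2forests V E ends v" "V - S \<subseteq> A - {v}"
      by (cases p) auto
    then show "(\<lambda>((S, F), T). (S \<union> B, F \<union> T)) ((\<lambda>(S, F). ((S \<inter> A, edges_in F ends A), edges_in F ends B)) p) = p"
      using glue_split by simp
  qed
  show "(\<lambda>((S, F), T). (S \<union> B, F \<union> T)) ` (rooted_2forests A EA ends v \<times> spanning_trees B EB ends)
          \<subseteq> {p \<in> rooted_2forests V E ends v. V - fst p \<subseteq> A - {v}}"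
  proof (rule image_subsetI)
    fix x assume "x \<in> rooted_2forests A EA ends v \<times> spanning_trees B EB ends"
    then obtain S F T where "x = ((S, F), T)" "(S, F) \<in> rooted_2forests A EA ends v"
      "T \<in> spanning_trees B EB ends"
      by auto
    then show "(\<lambda>((S, F), T). (S \<union> B, F \<union> T)) x \<in> {p \<in> rooted_2forests V E ends v. V - fst p \<subseteq> A - {v}}"
      using rooted_2forests_glue by simp
  qed
  show "(\<lambda>(S, F). ((S \<inter> A, edges_in F ends A), edges_in F ends B)) `
          {p \<in> rooted_2forests V E ends v. V - fst p \<subseteq> A - {v}}
          \<subseteq> rooted_2forests A EA ends v \<times> spanning_trees B EB ends"
  proof (rule image_subsetI)
    fix p assume "p \<in> {p \<in> rooted_2forests V E ends v. V - fst p \<subseteq> A - {v}}"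
    then obtain S F where "p = (S, F)" "(S, F) \<in> rooted_2forests V E ends v" "V - S \<subseteq> A - {v}"
      by (cases p) auto
    then show "(\<lambda>(S, F). ((S \<inter> A, edges_in F ends A), edges_in F ends B)) p
        \<in> rooted_2forests A EA ends v \<times> spanning_trees B EB ends"
      using rooted_2forests_split by simp
  qed
qed

lemma prod_glue:
  assumes "F \<subseteq> EA" "T \<subseteq> EB"
  shows "(\<Prod>e\<in>E - (F \<union> T). \<alpha> e) = (\<Prod>e\<in>EA - F. \<alpha> e) * (\<Prod>e\<in>EB - T. \<alpha> e)"
proof -
  have "E - (F \<union> T) = (EA - F) \<union> (EB - T)" "(EA - F) \<inter> (EB - T) = {}"
    using assms edges_split by blast+
  then show ?thesis
    by (simp add: prod.union_disjoint finite_parts)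
qed

lemma sum_rooted_2forests_far_side_in_A:
  assumes "\<And>S F. (S, F) \<in> rooted_2forests V E ends v \<Longrightarrow> V - S \<subseteq> B - {v} \<Longrightarrow> g (S, F) = 0"
  shows "sum g (rooted_2forests V E ends v) = sum g {p \<in> rooted_2forests V E ends v. V - fst p \<subseteq> A - {v}}"
proof (rule sum.mono_neutral_right)
  show "finite (rooted_2forests V E ends v)"
    using finite_spanning_2forests[OF finite_parts(1,2)] unfolding rooted_2forests_def by simp
  show "\<forall>p\<in>rooted_2forests V E ends v - {p \<in> rooted_2forests V E ends v. V - fst p \<subseteq> A - {v}}. g p = 0"
    using assms far_side_cases by fastforce
qed auto

lemma sum_rooted_2forests_glue:
  fixes \<rho> \<rho>' :: "'v \<Rightarrow> real^4"
  assumes "\<forall>u\<in>A - {v}. \<rho>' u = \<rho> u"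
  shows "(\<Sum>(S, F)\<in>{p \<in> rooted_2forests V E ends v. V - fst p \<subseteq> A - {v}}.
            mink_sq (\<Sum>u\<in>V - S. \<rho> u) * (\<Prod>e\<in>E - F. \<alpha> e))
       = (\<Sum>(S, F)\<in>rooted_2forests A EA ends v. mink_sq (\<Sum>u\<in>A - S. \<rho>' u) * (\<Prod>e\<in>EA - F. \<alpha> e))
         * psi B EB ends \<alpha>"
proof -
  let ?w = "\<lambda>(S, F). mink_sq (\<Sum>u\<in>V - S. \<rho> u) * (\<Prod>e\<in>E - F. \<alpha> e)"
  have "?w (S \<union> B, F \<union> T) = mink_sq (\<Sum>u\<in>A - S. \<rho>' u) * (\<Prod>e\<in>EA - F. \<alpha> e) * (\<Prod>e\<in>EB - T. \<alpha> e)"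
    if "(S, F) \<in> rooted_2forests A EA ends v" "T \<in> spanning_trees B EB ends" for S F T
  proof -
    have "S \<subseteq> A" "v \<in> S" "F \<subseteq> EA" "T \<subseteq> EB"
      using that unfolding rooted_2forests_def spanning_2forests_def spanning_trees_def by auto
    then have "V - (S \<union> B) = A - S"
      using cap unfolding cover[symmetric] by auto
    moreover have "(\<Sum>u\<in>A - S. \<rho> u) = (\<Sum>u\<in>A - S. \<rho>' u)"
    proof (rule sum.cong)
      show "\<rho> u = \<rho>' u" if "u \<in> A - S" for u
        using assms that \<open>v \<in> S\<close> by (metis DiffD1 DiffD2 DiffI singletonD)
    qed simp
    ultimately show ?thesis
      by (simp add: prod_glue[OF \<open>F \<subseteq> EA\<close> \<open>T \<subseteq> EB\<close>] mult.assoc)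
  qed
  then have "sum ?w {p \<in> rooted_2forests V E ends v. V - fst p \<subseteq> A - {v}} =
      (\<Sum>((S, F), T)\<in>rooted_2forests A EA ends v \<times> spanning_trees B EB ends.
         mink_sq (\<Sum>u\<in>A - S. \<rho>' u) * (\<Prod>e\<in>EA - F. \<alpha> e) * (\<Prod>e\<in>EB - T. \<alpha> e))"
    using sum.reindex_bij_betw[OF bij_betw_glue, of ?w, symmetric] by (auto intro!: sum.cong)
  then show ?thesis
    unfolding psi_def by (simp add: sum_product sum.cartesian_product split_def)
qed

end

theorem mainTheorem9:
  fixes V :: "'v set" and E :: "'e set" and ends :: "'e \<Rightarrow> 'v \<times> 'v"
    and \<alpha> m :: "'e \<Rightarrow> real" and \<rho> :: "'v \<Rightarrow> real^4"
    and x1 x2 x3 x4 v :: 'v and A B :: "'v set"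
  assumes G: "graph V E ends"
    and massless: "\<forall>e\<in>E. m e = 0"
    and X_sub: "{x1, x2, x3, x4} \<subseteq> V"
    and X_dist: "card {x1, x2, x3, x4} = 4"
    and rho_out: "\<forall>u\<in>V - {x1, x2, x3, x4}. \<rho> u = 0"
    and rho_sum: "(\<Sum>u\<in>V. \<rho> u) = 0"
    and onshell: "\<forall>x\<in>{x1, x2, x3, x4}. mink_sq (\<rho> x) = 0"
    and sep_cover: "A \<union> B = V"
    and sep_cap: "A \<inter> B = {v}"
    and sep_noedge: "\<forall>e\<in>E. \<not> ((fst (ends e) \<in> A - B \<and> snd (ends e) \<in> B - A) \<or>
                              (fst (ends e) \<in> B - A \<and> snd (ends e) \<in> A - B))"
    and xA: "x1 \<in> A - {v}" "x2 \<in> A - {v}" "x3 \<in> A - {v}"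
    and xB: "x4 \<in> B - {v}"
  shows "phi V E ends \<alpha> m \<rho> =
         phi A (edges_in E ends A) ends \<alpha> m (\<rho>(v := \<rho> x4)) * psi B (edges_in E ends B) ends \<alpha>"
proof -
  have "\<forall>e\<in>E. (fst (ends e) \<in> A \<and> snd (ends e) \<in> A) \<or> (fst (ends e) \<in> B \<and> snd (ends e) \<in> B)"
    using G sep_cover sep_noedge unfolding graph_def by blast
  then interpret one_separation V E ends A B v
    using G sep_cover sep_cap by unfold_locales
  define \<rho>' where "\<rho>' = \<rho>(v := \<rho> x4)"
  have \<rho>_B: "\<forall>u\<in>B - {x4}. \<rho> u = 0"
    using rho_out xA sep_cap sep_cover by auto
  have conservation_A: "(\<Sum>u\<in>A. \<rho>' u) = 0"
    using sum_upd_cut_vertex[OF finite_parts(3,4) sep_cap xB \<rho>_B] rho_sum sep_cover unfolding \<rho>'_def by simp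
  have far_side_in_B: "mink_sq (\<Sum>u\<in>V - S. \<rho> u) = 0" if "V - S \<subseteq> B - {v}" for S
    using mink_sq_sum_onshell_support[of "V - S" x4 \<rho>] that \<rho>_B onshell finite_parts(1) by auto
  have "v \<in> A" "v \<in> V"
    using sep_cap sep_cover by auto
  have "phi V E ends \<alpha> m \<rho> =
      (\<Sum>(S, F)\<in>rooted_2forests V E ends v. mink_sq (\<Sum>u\<in>V - S. \<rho> u) * (\<Prod>e\<in>E - F. \<alpha> e))"
    using phi_massless_eq_rooted_sum[OF finite_parts(1,2) \<open>v \<in> V\<close> rho_sum massless] .
  also have "\<dots> = (\<Sum>(S, F)\<in>{p \<in> rooted_2forests V E ends v. V - fst p \<subseteq> A - {v}}.
      mink_sq (\<Sum>u\<in>V - S. \<rho> u) * (\<Prod>e\<in>E - F. \<alpha> e))"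
    using far_side_in_B by (intro sum_rooted_2forests_far_side_in_A) simp
  also have "\<dots> = (\<Sum>(S, F)\<in>rooted_2forests A EA ends v. mink_sq (\<Sum>u\<in>A - S. \<rho>' u) * (\<Prod>e\<in>EA - F. \<alpha> e))
      * psi B EB ends \<alpha>"
    by (rule sum_rooted_2forests_glue) (simp add: \<rho>'_def)
  also have "\<dots> = phi A EA ends \<alpha> m \<rho>' * psi B EB ends \<alpha>"
    using phi_massless_eq_rooted_sum[OF finite_parts(3,5) \<open>v \<in> A\<close> conservation_A] massless
    by (simp add: edges_in_def)
  finally show ?thesis
    unfolding \<rho>'_def .
qed

end
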